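(* Let $d$ be a positive integer and let $A\in\mathbb{R}^{[3]\times[n]}$ be a matrix that does not have an elimination ordering. Then there exists $b\in\mathbb{R}^{[3]}$ such that the solution graph $G(R(A,b))$ is not connected.
   Context: Fix a positive integer $d$ and let $D=\{0,1,\dots,d\}$; $[n]=\{1,\dots,n\}$. For $A\in\mathbb{R}^{[m]\times[n]}$ and $b\in\mathbb{R}^{[m]}$, $R(A,b)=\{x\in D^{[n]} : Ax\ge b\}$. For $R\subseteq D^{[n]}$, the solution graph $G(R)$ is the undirected graph with vertex set $R$ in which $x,y$ are adjacent iff they differ in exactly one coordinate. A matrix $A=(a_{ij})$ with column index set $J$ can be eliminated at column $j\in J$ if (i) for every row $i$ with $a_{ij}>0$ we have $a_{ij'}=0$ for all $j'\in J\setminus\{j\}$, or (ii) for every row $i$ with $a_{ij}<0$ we have $a_{ij'}=0$ for all $j'\in J\setminus\{j\}$. For $J'\subseteq[n]$, $\mathrm{elm}(A,J')$ is the submatrix of $A$ obtained by deleting the columns indexed by $J'$. A sequence $(j_1,\dots,j_n)$ of the elements of $[n]$ is an elimination ordering (EO) of $A$ if for every $t\in[n]$ the matrix $\mathrm{elm}(A,\{j_1,\dots,j_{t-1}\})$ can be eliminated at column $j_t$. *)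

theory Defs
  imports Complex_Main "HOL-Library.FuncSet"
begin

text \<open>Matrices A in R^([m] x [n]) are functions nat => nat => real, entry A i j for
  row i in {1..m}, column j in {1..n}; values outside are irrelevant.
  Points of D^[n] are extensional functions {1..n} ->E {0..d}.\<close>

definition sol_set :: "nat \<Rightarrow> nat \<Rightarrow> nat \<Rightarrow> (nat \<Rightarrow> nat \<Rightarrow> real) \<Rightarrow> (nat \<Rightarrow> real) \<Rightarrow> (nat \<Rightarrow> nat) set" where
  "sol_set d m n A b = {x \<in> {1..n} \<rightarrow>\<^sub>E {0..d}.
      \<forall>i\<in>{1..m}. (\<Sum>j=1..n. A i j * real (x j)) \<ge> b i}"

definition sol_adj :: "nat \<Rightarrow> (nat \<Rightarrow> nat) set \<Rightarrow> (nat \<Rightarrow> nat) \<Rightarrow> (nat \<Rightarrow> nat) \<Rightarrow> bool" where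
  "sol_adj n R x y \<longleftrightarrow> x \<in> R \<and> y \<in> R \<and> card {j\<in>{1..n}. x j \<noteq> y j} = 1"

definition sol_graph_connected :: "nat \<Rightarrow> (nat \<Rightarrow> nat) set \<Rightarrow> bool" where
  "sol_graph_connected n R \<longleftrightarrow> (\<forall>x\<in>R. \<forall>y\<in>R. (sol_adj n R)\<^sup>*\<^sup>* x y)"

definition can_elim :: "nat \<Rightarrow> (nat \<Rightarrow> nat \<Rightarrow> real) \<Rightarrow> nat set \<Rightarrow> nat \<Rightarrow> bool" where
  "can_elim m A J j \<longleftrightarrow> j \<in> J \<and>
     ((\<forall>i\<in>{1..m}. A i j > 0 \<longrightarrow> (\<forall>j'\<in>J - {j}. A i j' = 0)) \<or>
      (\<forall>i\<in>{1..m}. A i j < 0 \<longrightarrow> (\<forall>j'\<in>J - {j}. A i j' = 0)))"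

text \<open>elm(A, J') keeps the columns {1..n} - J'.\<close>
definition elim_ordering :: "nat \<Rightarrow> nat \<Rightarrow> (nat \<Rightarrow> nat \<Rightarrow> real) \<Rightarrow> nat list \<Rightarrow> bool" where
  "elim_ordering m n A js \<longleftrightarrow> distinct js \<and> set js = {1..n} \<and>
     (\<forall>t<n. can_elim m A ({1..n} - set (take t js)) (js ! t))"

end

theory Submission
  imports Defs
begin

text \<open>
  A matrix without elimination ordering has a nonempty stuck set J of columns: no column of J
  can be eliminated within J. If two rows have opposite signs in two different columns, take
  those columns; otherwise every pair of rows has opposite signs in at most one column, and a
  stuck set forces three columns whose sign patterns form a cycle over the three rows (each
  has one zero entry and opposite signs in the other two rows), all remaining columns being
  sign-uniform. In either case there is a set T of columns, each with a designated row, a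
  point x putting every column of T at the endpoint of {0..d} that maximizes its designated
  row, and a point y one unit inward on some of these columns, such that moving y inward
  costs every designated row less than moving its own column away from x. With
  b = min(Ax, Ay), no coordinate in T can then ever leave its value in x, so x and y lie in
  different components of the solution graph.
\<close>

lemma sol_adjE:
  assumes "sol_adj n R z z'"
  obtains j where "j \<in> {1..n}" "z j \<noteq> z' j" "\<And>l. l \<in> {1..n} - {j} \<Longrightarrow> z l = z' l"
proof -
  from assms have "card {j\<in>{1..n}. z j \<noteq> z' j} = 1" by (simp add: sol_adj_def)
  then obtain j where "{j\<in>{1..n}. z j \<noteq> z' j} = {j}" by (rule card_1_singletonE)
  then show ?thesis using that by blast
qed

lemma row_sum_le_single_change:
  fixes a :: "nat \<Rightarrow> real" and x z :: "nat \<Rightarrow> nat"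
  assumes z: "z \<in> {1..n} \<rightarrow>\<^sub>E {0..d}" and j: "j \<in> {1..n}"
    and agree: "\<And>l. l \<in> T - {j} \<Longrightarrow> z l = x l"
    and top: "\<forall>l\<in>{1..n} - T. \<forall>v\<le>d. a l * real v \<le> a l * real (x l)"
  shows "(\<Sum>l=1..n. a l * real (z l)) \<le> (\<Sum>l=1..n. a l * real (x l)) + a j * (real (z j) - real (x j))"
proof -
  have "(\<Sum>l=1..n. a l * real (z l)) - (\<Sum>l=1..n. a l * real (x l))
      = (\<Sum>l=1..n. a l * (real (z l) - real (x l)))"
    by (simp add: sum_subtractf right_diff_distrib)
  also have "\<dots> \<le> (\<Sum>l=1..n. if l = j then a j * (real (z j) - real (x j)) else 0)"
  proof (rule sum_mono)
    fix l assume l: "l \<in> {1..n}"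
    have "a l * real (z l) \<le> a l * real (x l)" if "l \<noteq> j"
    proof (cases "l \<in> T")
      case True then show ?thesis using agree that by simp
    next
      case False
      have "z l \<le> d" using z l by auto
      with False l show ?thesis using top[rule_format, of l "z l"] by simp
    qed
    then show "a l * (real (z l) - real (x l)) \<le> (if l = j then a j * (real (z j) - real (x j)) else 0)"
      by (simp add: right_diff_distrib)
  qed
  also have "\<dots> = a j * (real (z j) - real (x j))" using j by simp
  finally show ?thesis by simp
qed

lemma sol_graph_disconnected_if_frozen:
  fixes A :: "nat \<Rightarrow> nat \<Rightarrow> real" and x y :: "nat \<Rightarrow> nat"
  assumes T: "T \<subseteq> {1..n}"
    and x: "x \<in> {1..n} \<rightarrow>\<^sub>E {0..d}" and y: "y \<in> {1..n} \<rightarrow>\<^sub>E {0..d}"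
    and j\<^sub>0: "j\<^sub>0 \<in> T" "x j\<^sub>0 \<noteq> y j\<^sub>0"
    and frozen: "\<And>j u. j \<in> T \<Longrightarrow> u \<le> d \<Longrightarrow> u \<noteq> x j \<Longrightarrow> \<exists>i\<in>{1..m}.
       A i j * (real u - real (x j)) < min 0 (\<Sum>l=1..n. A i l * (real (y l) - real (x l))) \<and>
       (\<forall>l\<in>{1..n} - T. \<forall>v\<le>d. A i l * real v \<le> A i l * real (x l))"
  shows "\<exists>b. \<not> sol_graph_connected n (sol_set d m n A b)"
proof
  define b where "b i = min (\<Sum>l=1..n. A i l * real (x l)) (\<Sum>l=1..n. A i l * real (y l))" for i
  let ?R = "sol_set d m n A b"
  have xR: "x \<in> ?R" and yR: "y \<in> ?R" unfolding sol_set_def b_def using x y by auto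
  have slice: "z \<in> ?R \<and> (\<forall>l\<in>T. z l = x l)" if "(sol_adj n ?R)\<^sup>*\<^sup>* x z" for z
    using that
  proof (induction rule: rtranclp_induct)
    case base
    then show ?case using xR by simp
  next
    case (step z z')
    then have zT: "\<forall>l\<in>T. z l = x l" and z'R: "z' \<in> ?R" by (auto simp: sol_adj_def)
    obtain j where j: "j \<in> {1..n}" "z j \<noteq> z' j" and same: "\<And>l. l \<in> {1..n} - {j} \<Longrightarrow> z l = z' l"
      using sol_adjE step.hyps(2) by blast
    have z': "z' \<in> {1..n} \<rightarrow>\<^sub>E {0..d}" using z'R by (simp add: sol_set_def)
    have agree: "z' l = x l" if "l \<in> T - {j}" for l
    proof -
      have "l \<in> {1..n} - {j}" using that T by auto
      then have "z l = z' l" by (rule same)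
      then show ?thesis using zT that by simp
    qed
    have "j \<notin> T"
    proof
      assume jT: "j \<in> T"
      have "z' j \<le> d" "z' j \<noteq> x j" using z' j jT zT by auto
      then obtain i where i: "i \<in> {1..m}"
        and drop: "A i j * (real (z' j) - real (x j)) < min 0 (\<Sum>l=1..n. A i l * (real (y l) - real (x l)))"
        and top: "\<forall>l\<in>{1..n} - T. \<forall>v\<le>d. A i l * real v \<le> A i l * real (x l)"
        using frozen jT by blast
      have "(\<Sum>l=1..n. A i l * real (z' l)) \<le> (\<Sum>l=1..n. A i l * real (x l)) + A i j * (real (z' j) - real (x j))"
        by (rule row_sum_le_single_change[OF z' j(1) agree top])
      also have "\<dots> < b i"
        using drop by (simp add: b_def sum_subtractf right_diff_distrib)
      finally show False using z'R i unfolding sol_set_def by fastforce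
    qed
    with agree z'R show ?case by blast
  qed
  show "\<not> sol_graph_connected n ?R"
  proof
    assume "sol_graph_connected n ?R"
    then have "(sol_adj n ?R)\<^sup>*\<^sup>* x y" using xR yR by (simp add: sol_graph_connected_def)
    then have "y j\<^sub>0 = x j\<^sub>0" using slice j\<^sub>0(1) by blast
    with j\<^sub>0(2) show False by simp
  qed
qed

definition argmax_coord :: "nat \<Rightarrow> real \<Rightarrow> nat" where
  "argmax_coord d a = (if a < 0 then 0 else d)"

lemma mult_le_mult_endpoint:
  fixes a :: real
  assumes "(a \<le> 0 \<and> w = 0) \<or> (0 \<le> a \<and> w = d)" "v \<le> d"
  shows "a * real v \<le> a * real w"
  using assms by (auto simp: mult_left_mono mult_nonpos_nonneg)

lemma mult_argmax_coord_drop: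
  fixes a :: real
  assumes "a \<noteq> 0" "v \<le> d" "v \<noteq> argmax_coord d a"
  shows "a * (real v - real (argmax_coord d a)) \<le> - \<bar>a\<bar>"
proof (cases "a < 0")
  case True
  then have "a * real v \<le> a * 1" using assms by (intro mult_left_mono_neg) (auto simp: argmax_coord_def)
  then show ?thesis using True by (simp add: argmax_coord_def)
next
  case False
  then have "a * (real v - real d) \<le> a * (-1)" using assms by (intro mult_left_mono) (auto simp: argmax_coord_def)
  then show ?thesis using False assms(1) by (simp add: argmax_coord_def)
qed

lemma sol_graph_disconnected_by_blocking_rows:
  fixes A :: "nat \<Rightarrow> nat \<Rightarrow> real" and \<rho> :: "nat \<Rightarrow> nat"
  assumes d: "d > 0" and T: "T \<subseteq> {1..n}" and S: "S \<subseteq> T" "j\<^sub>0 \<in> S"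
    and rows: "\<rho> ` T \<subseteq> {1..m}"
    and nonzero: "\<And>j. j \<in> T \<Longrightarrow> A (\<rho> j) j \<noteq> 0"
    and uniform: "\<And>l. l \<in> {1..n} - T \<Longrightarrow> (\<forall>i\<in>\<rho> ` T. 0 \<le> A i l) \<or> (\<forall>i\<in>\<rho> ` T. A i l \<le> 0)"
    and slack: "\<And>j. j \<in> T \<Longrightarrow> (\<Sum>l\<in>S. A (\<rho> j) l * sgn (A (\<rho> l) l)) < \<bar>A (\<rho> j) j\<bar>"
  shows "\<exists>b. \<not> sol_graph_connected n (sol_set d m n A b)"
proof -
  define x where "x l = (if l \<in> {1..n} then
      (if l \<in> T then argmax_coord d (A (\<rho> l) l) else if \<forall>i\<in>\<rho> ` T. A i l \<le> 0 then 0 else d)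
      else undefined)" for l
  define y where "y l = (if l \<in> S then (if A (\<rho> l) l < 0 then 1 else d - 1) else x l)" for l
  have x: "x \<in> {1..n} \<rightarrow>\<^sub>E {0..d}" by (auto simp: x_def argmax_coord_def)
  have y: "y \<in> {1..n} \<rightarrow>\<^sub>E {0..d}"
  proof (rule PiE_I)
    show "y l \<in> {0..d}" if "l \<in> {1..n}" for l using x that d by (auto simp: y_def)
    show "y l = undefined" if "l \<notin> {1..n}" for l using that S T by (auto simp: y_def x_def)
  qed
  have step: "real (y l) - real (x l) = (if l \<in> S then - sgn (A (\<rho> l) l) else 0)" for l
    using S T d nonzero[of l] by (auto simp: x_def y_def argmax_coord_def of_nat_diff)
  have change: "(\<Sum>l=1..n. A i l * (real (y l) - real (x l))) = - (\<Sum>l\<in>S. A i l * sgn (A (\<rho> l) l))" for i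
  proof -
    have "(\<Sum>l=1..n. A i l * (real (y l) - real (x l))) = (\<Sum>l\<in>S. A i l * (real (y l) - real (x l)))"
      by (rule sum.mono_neutral_right) (use S T step in auto)
    then show ?thesis by (simp add: step sum_negf)
  qed
  show ?thesis
  proof (rule sol_graph_disconnected_if_frozen[OF T x y])
    show "j\<^sub>0 \<in> T" using S by blast
    have "A (\<rho> j\<^sub>0) j\<^sub>0 \<noteq> 0" using S nonzero by blast
    then show "x j\<^sub>0 \<noteq> y j\<^sub>0" using step[of j\<^sub>0] S by (auto simp: sgn_if split: if_splits)
    fix j u assume j: "j \<in> T" and u: "u \<le> d" "u \<noteq> x j"
    let ?i = "\<rho> j"
    have "A ?i j * (real u - real (x j)) \<le> - \<bar>A ?i j\<bar>"
      using mult_argmax_coord_drop[OF nonzero[OF j] u(1)] u(2) j T by (auto simp: x_def)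
    also have "\<dots> < min 0 (\<Sum>l=1..n. A ?i l * (real (y l) - real (x l)))"
      unfolding change using slack[OF j] nonzero[OF j] by simp
    finally have drop: "A ?i j * (real u - real (x j)) < min 0 (\<Sum>l=1..n. A ?i l * (real (y l) - real (x l)))" .
    have "A ?i l * real v \<le> A ?i l * real (x l)" if l: "l \<in> {1..n} - T" and v: "v \<le> d" for l v
    proof (rule mult_le_mult_endpoint[OF _ v])
      have "x l = (if \<forall>i\<in>\<rho> ` T. A i l \<le> 0 then 0 else d)" using l by (simp add: x_def)
      then show "(A ?i l \<le> 0 \<and> x l = 0) \<or> (0 \<le> A ?i l \<and> x l = d)" using uniform[OF l] j by auto
    qed
    with drop show "\<exists>i\<in>{1..m}. A i j * (real u - real (x j)) < min 0 (\<Sum>l=1..n. A i l * (real (y l) - real (x l))) \<and>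
       (\<forall>l\<in>{1..n} - T. \<forall>v\<le>d. A i l * real v \<le> A i l * real (x l))"
      using rows j by blast
  qed
qed

lemma mult_sgn_of_opposite:
  fixes a b :: real
  assumes "a * b < 0"
  shows "a * sgn b = - \<bar>a\<bar>"
  using assms by (auto simp: mult_less_0_iff sgn_if)

lemma sol_graph_disconnected_of_two_opposite_columns:
  fixes A :: "nat \<Rightarrow> nat \<Rightarrow> real"
  assumes d: "d > 0" and r: "r \<in> {1..m}" and s: "s \<in> {1..m}"
    and j: "j \<in> {1..n}" and k: "k \<in> {1..n}" and jk: "j \<noteq> k"
    and opp_j: "A r j * A s j < 0" and opp_k: "A r k * A s k < 0"
    and le: "\<bar>A r j\<bar> \<le> \<bar>A r k\<bar>"
  shows "\<exists>b. \<not> sol_graph_connected n (sol_set d m n A b)"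
proof -
  define T where "T = {l \<in> {1..n}. A r l * A s l < 0}"
  define \<rho> where "\<rho> l = (if l = k then s else r)" for l
  have sgn_j: "A r j * sgn (A r j) = \<bar>A r j\<bar>" "A s j * sgn (A r j) = - \<bar>A s j\<bar>"
    using mult_sgn_of_opposite[of "A s j" "A r j"] opp_j by (simp_all add: abs_sgn[symmetric] mult.commute)
  have sgn_k: "A s k * sgn (A s k) = \<bar>A s k\<bar>" "A r k * sgn (A s k) = - \<bar>A r k\<bar>"
    using mult_sgn_of_opposite[OF opp_k] by (simp_all add: abs_sgn[symmetric])
  show ?thesis
  proof (rule sol_graph_disconnected_by_blocking_rows[OF d, where T = T and S = "{j, k}" and j\<^sub>0 = j and \<rho> = \<rho>])
    show "T \<subseteq> {1..n}" "{j, k} \<subseteq> T" "j \<in> {j, k}" "\<rho> ` T \<subseteq> {1..m}"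
      using j k opp_j opp_k r s by (auto simp: T_def \<rho>_def)
    show "A (\<rho> l) l \<noteq> 0" if "l \<in> T" for l
      using that by (auto simp: T_def \<rho>_def)
    show "(\<forall>i\<in>\<rho> ` T. 0 \<le> A i l) \<or> (\<forall>i\<in>\<rho> ` T. A i l \<le> 0)" if "l \<in> {1..n} - T" for l
    proof -
      have "\<rho> ` T \<subseteq> {r, s}" by (auto simp: \<rho>_def)
      moreover have "0 \<le> A r l * A s l" using that by (auto simp: T_def)
      ultimately show ?thesis by (auto simp: zero_le_mult_iff)
    qed
    show "(\<Sum>l'\<in>{j, k}. A (\<rho> l) l' * sgn (A (\<rho> l') l')) < \<bar>A (\<rho> l) l\<bar>" if "l \<in> T" for l
    proof (cases "l = k")
      case True
      then show ?thesis using jk sgn_j sgn_k opp_j by (auto simp: \<rho>_def)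
    next
      case False
      have "A r l \<noteq> 0" using that by (auto simp: T_def)
      then show ?thesis using False jk sgn_j sgn_k le by (auto simp: \<rho>_def)
    qed
  qed
qed

lemma sol_graph_disconnected_of_cyclic_triple:
  fixes A :: "nat \<Rightarrow> nat \<Rightarrow> real"
  assumes d: "d > 0" and rows: "{p, q, t} \<subseteq> {1..m}" and cols: "{\<alpha>, \<beta>, \<gamma>} \<subseteq> {1..n}"
    and \<alpha>: "A t \<alpha> = 0" "A p \<alpha> * A q \<alpha> < 0"
    and \<beta>: "A p \<beta> = 0" "A q \<beta> * A t \<beta> < 0"
    and \<gamma>: "A q \<gamma> = 0" "A p \<gamma> * A t \<gamma> < 0"
    and uniform: "\<And>l. l \<in> {1..n} - {\<alpha>, \<beta>, \<gamma>} \<Longrightarrow> (\<forall>i\<in>{p, q, t}. 0 \<le> A i l) \<or> (\<forall>i\<in>{p, q, t}. A i l \<le> 0)"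
  shows "\<exists>b. \<not> sol_graph_connected n (sol_set d m n A b)"
proof -
  define \<rho> where "\<rho> l = (if l = \<alpha> then p else if l = \<beta> then q else t)" for l
  have distinct: "\<alpha> \<noteq> \<beta>" "\<alpha> \<noteq> \<gamma>" "\<beta> \<noteq> \<gamma>" using \<alpha> \<beta> \<gamma> by auto
  have image: "\<rho> ` {\<alpha>, \<beta>, \<gamma>} = {p, q, t}" using distinct by (auto simp: \<rho>_def)
  have sgn_\<alpha>: "A p \<alpha> * sgn (A p \<alpha>) = \<bar>A p \<alpha>\<bar>" "A q \<alpha> * sgn (A p \<alpha>) = - \<bar>A q \<alpha>\<bar>"
    using mult_sgn_of_opposite[of "A q \<alpha>" "A p \<alpha>"] \<alpha> by (simp_all add: abs_sgn[symmetric] mult.commute)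
  have sgn_\<beta>: "A q \<beta> * sgn (A q \<beta>) = \<bar>A q \<beta>\<bar>" "A t \<beta> * sgn (A q \<beta>) = - \<bar>A t \<beta>\<bar>"
    using mult_sgn_of_opposite[of "A t \<beta>" "A q \<beta>"] \<beta> by (simp_all add: abs_sgn[symmetric] mult.commute)
  have sgn_\<gamma>: "A t \<gamma> * sgn (A t \<gamma>) = \<bar>A t \<gamma>\<bar>" "A p \<gamma> * sgn (A t \<gamma>) = - \<bar>A p \<gamma>\<bar>"
    using mult_sgn_of_opposite[of "A p \<gamma>" "A t \<gamma>"] \<gamma> by (simp_all add: abs_sgn[symmetric])
  show ?thesis
  proof (rule sol_graph_disconnected_by_blocking_rows[OF d, where T = "{\<alpha>, \<beta>, \<gamma>}" and S = "{\<alpha>, \<beta>, \<gamma>}" and j\<^sub>0 = \<alpha> and \<rho> = \<rho>])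
    show "{\<alpha>, \<beta>, \<gamma>} \<subseteq> {1..n}" "{\<alpha>, \<beta>, \<gamma>} \<subseteq> {\<alpha>, \<beta>, \<gamma>}" "\<alpha> \<in> {\<alpha>, \<beta>, \<gamma>}"
      "\<rho> ` {\<alpha>, \<beta>, \<gamma>} \<subseteq> {1..m}"
      using cols rows image by auto
    show "A (\<rho> l) l \<noteq> 0" if "l \<in> {\<alpha>, \<beta>, \<gamma>}" for l
      using that distinct \<alpha> \<beta> \<gamma> by (auto simp: \<rho>_def)
    show "(\<forall>i\<in>\<rho> ` {\<alpha>, \<beta>, \<gamma>}. 0 \<le> A i l) \<or> (\<forall>i\<in>\<rho> ` {\<alpha>, \<beta>, \<gamma>}. A i l \<le> 0)"
      if "l \<in> {1..n} - {\<alpha>, \<beta>, \<gamma>}" for l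
      unfolding image by (rule uniform[OF that])
    show "(\<Sum>l'\<in>{\<alpha>, \<beta>, \<gamma>}. A (\<rho> l) l' * sgn (A (\<rho> l') l')) < \<bar>A (\<rho> l) l\<bar>"
      if "l \<in> {\<alpha>, \<beta>, \<gamma>}" for l
      using that distinct \<alpha> \<beta> \<gamma> sgn_\<alpha> sgn_\<beta> sgn_\<gamma> by (auto simp: \<rho>_def)
  qed
qed

definition stuck :: "nat \<Rightarrow> (nat \<Rightarrow> nat \<Rightarrow> real) \<Rightarrow> nat set \<Rightarrow> bool" where
  "stuck m A J \<longleftrightarrow> J \<noteq> {} \<and> (\<forall>j\<in>J. \<not> can_elim m A J j)"

lemma elim_list_if_no_stuck_subset:
  assumes "finite K" and "\<And>J. J \<subseteq> K \<Longrightarrow> \<not> stuck m A J"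
  shows "\<exists>js. distinct js \<and> set js = K \<and> (\<forall>t<card K. can_elim m A (K - set (take t js)) (js ! t))"
  using assms
proof (induction "card K" arbitrary: K)
  case 0
  then show ?case by (intro exI[of _ "[]"]) simp
next
  case (Suc c K)
  then have "K \<noteq> {}" by auto
  then obtain j where j: "j \<in> K" "can_elim m A K j" using Suc.prems(2)[of K] by (auto simp: stuck_def)
  have "\<exists>js. distinct js \<and> set js = K - {j} \<and>
      (\<forall>t<card (K - {j}). can_elim m A (K - {j} - set (take t js)) (js ! t))"
    by (rule Suc.hyps(1)) (use Suc.hyps(2) Suc.prems j(1) in auto)
  then obtain js where js: "distinct js" "set js = K - {j}"
    and elim: "\<forall>t<card (K - {j}). can_elim m A (K - {j} - set (take t js)) (js ! t)"
    by blast
  show ?case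
  proof (intro exI[of _ "j # js"] conjI allI impI)
    show "distinct (j # js)" "set (j # js) = K" using js j by auto
    fix t assume t: "t < card K"
    show "can_elim m A (K - set (take t (j # js))) ((j # js) ! t)"
    proof (cases t)
      case 0
      then show ?thesis using j by simp
    next
      case (Suc t')
      then have "t' < card (K - {j})" using t j Suc.prems(1) by auto
      then have "can_elim m A (K - {j} - set (take t' js)) (js ! t')" using elim by blast
      moreover have "K - set (take t (j # js)) = K - {j} - set (take t' js)" using Suc by auto
      ultimately show ?thesis using Suc by simp
    qed
  qed
qed

lemma stuck_subset_if_no_elim_ordering:
  assumes "\<not> (\<exists>js. elim_ordering m n A js)"
  obtains J where "J \<subseteq> {1..n}" "stuck m A J"
proof (rule ccontr)
  assume "\<not> thesis"
  then have "\<And>J. J \<subseteq> {1..n} \<Longrightarrow> \<not> stuck m A J" using that by blast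
  then obtain js where "distinct js" "set js = {1..n}"
    "\<forall>t<card {1..n}. can_elim m A ({1..n} - set (take t js)) (js ! t)"
    using elim_list_if_no_stuck_subset[of "{1..n}" m A] by blast
  then have "elim_ordering m n A js" by (simp add: elim_ordering_def)
  with assms show False by blast
qed

lemma stuck_columnE:
  assumes "stuck m A J" "c \<in> J"
  obtains p q c1 c2 where "p \<in> {1..m}" "A p c > 0" "c1 \<in> J - {c}" "A p c1 \<noteq> 0"
    and "q \<in> {1..m}" "A q c < 0" "c2 \<in> J - {c}" "A q c2 \<noteq> 0"
proof -
  have "\<not> can_elim m A J c" using assms by (simp add: stuck_def)
  then have "(\<exists>p\<in>{1..m}. A p c > 0 \<and> (\<exists>c1\<in>J - {c}. A p c1 \<noteq> 0)) \<and>
      (\<exists>q\<in>{1..m}. A q c < 0 \<and> (\<exists>c2\<in>J - {c}. A q c2 \<noteq> 0))"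
    using assms(2) unfolding can_elim_def by blast
  then show ?thesis using that by blast
qed

lemma stuck_column_opposite:
  assumes "stuck m A J" "c \<in> J" "A i c \<noteq> 0"
  obtains i' where "i' \<in> {1..m}" "A i c * A i' c < 0"
proof -
  obtain p q where "p \<in> {1..m}" "A p c > 0" "q \<in> {1..m}" "A q c < 0"
    using stuck_columnE[OF assms(1,2)] by metis
  then show ?thesis using that assms(3) by (cases "A i c > 0") (auto simp: mult_less_0_iff)
qed

definition opposite_signs_unique :: "nat \<Rightarrow> nat \<Rightarrow> (nat \<Rightarrow> nat \<Rightarrow> real) \<Rightarrow> bool" where
  "opposite_signs_unique m n A \<longleftrightarrow> (\<forall>r\<in>{1..m}. \<forall>s\<in>{1..m}. \<forall>j\<in>{1..n}. \<forall>k\<in>{1..n}.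
     A r j * A s j < 0 \<longrightarrow> A r k * A s k < 0 \<longrightarrow> j = k)"

lemma opposite_signs_uniqueD:
  assumes "opposite_signs_unique m n A" "r \<in> {1..m}" "s \<in> {1..m}" "j \<in> {1..n}" "k \<in> {1..n}"
    "A r j * A s j < 0" "A r k * A s k < 0"
  shows "j = k"
  using assms unfolding opposite_signs_unique_def by blast

lemma third_rowE:
  fixes p q :: nat
  assumes "p \<in> {1..3}" "q \<in> {1..3}" "p \<noteq> q"
  obtains t where "{1..3} = {p, q, t}"
proof (rule that[of "6 - p - q"])
  have "p = 1 \<or> p = 2 \<or> p = 3" "q = 1 \<or> q = 2 \<or> q = 3" using assms(1,2) by auto
  then show "{1..3} = {p, q, 6 - p - q}" using assms(3) by auto
qed

lemma stuck_witness_opposite_third_row: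
  fixes A :: "nat \<Rightarrow> nat \<Rightarrow> real"
  assumes uniq: "opposite_signs_unique 3 n A" and J: "stuck 3 A J" "J \<subseteq> {1..n}"
    and c: "c \<in> J" and c': "c' \<in> J - {c}" and rows: "{1..3} = {p, q, t}"
    and pq: "A p c * A q c < 0" and p: "A p c' \<noteq> 0"
  shows "A p c' * A t c' < 0"
proof -
  obtain w where w: "w \<in> {1..3}" "A p c' * A w c' < 0"
    using stuck_column_opposite[OF J(1) _ p] c' by blast
  have "w \<noteq> p"
  proof
    assume "w = p"
    with w(2) show False by (simp add: not_square_less_zero)
  qed
  moreover have "w \<noteq> q"
  proof
    assume "w = q"
    with w(2) have "A p c' * A q c' < 0" by simp
    moreover have "p \<in> {1..3}" "q \<in> {1..3}" by (simp_all only: rows insertI1 insertI2)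
    moreover have "c \<in> {1..n}" "c' \<in> {1..n}" using c c' J(2) by auto
    ultimately have "c = c'" using opposite_signs_uniqueD[OF uniq _ _ _ _ pq] by metis
    with c' show False by simp
  qed
  moreover have "w \<in> {p, q, t}" using w(1) by (simp only: rows)
  ultimately show ?thesis using w(2) by auto
qed

lemma stuck_column_structure:
  fixes A :: "nat \<Rightarrow> nat \<Rightarrow> real"
  assumes uniq: "opposite_signs_unique 3 n A" and J: "stuck 3 A J" "J \<subseteq> {1..n}" and c: "c \<in> J"
  obtains p q t c1 c2 where "{1..3} = {p, q, t}" "A p c > 0" "A q c < 0" "A t c = 0"
    and "c1 \<in> J" "A p c1 * A t c1 < 0" and "c2 \<in> J" "A q c2 * A t c2 < 0"
proof -
  obtain p q c1 c2 where p: "p \<in> {1..3}" "A p c > 0" and c1: "c1 \<in> J - {c}" "A p c1 \<noteq> 0"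
    and q: "q \<in> {1..3}" "A q c < 0" and c2: "c2 \<in> J - {c}" "A q c2 \<noteq> 0"
    by (rule stuck_columnE[OF J(1) c])
  have "p \<noteq> q" using p q by auto
  then obtain t where rows: "{1..3} = {p, q, t}" using third_rowE[OF p(1) q(1)] by blast
  have pq: "A p c * A q c < 0" "A q c * A p c < 0" using p q by (simp_all add: mult_pos_neg mult_neg_pos)
  have c1t: "A p c1 * A t c1 < 0"
    by (rule stuck_witness_opposite_third_row[OF uniq J c c1(1) rows pq(1) c1(2)])
  have c2t: "A q c2 * A t c2 < 0"
    by (rule stuck_witness_opposite_third_row[OF uniq J c c2(1) _ pq(2) c2(2)])
      (simp only: rows insert_commute[of p q])
  have t: "t \<in> {1..3}" by (simp only: rows insertI1 insertI2)
  have cols: "c \<in> {1..n}" "c1 \<in> {1..n}" "c2 \<in> {1..n}" using c c1 c2 J(2) by auto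
  have "A t c = 0"
  proof (rule ccontr)
    assume "A t c \<noteq> 0"
    then consider "A t c > 0" | "A t c < 0" by linarith
    then show False
    proof cases
      case 1
      then have "A q c * A t c < 0" using q(2) by (simp add: mult_neg_pos)
      then have "c = c2" by (rule opposite_signs_uniqueD[OF uniq q(1) t cols(1,3) _ c2t])
      with c2(1) show False by simp
    next
      case 2
      then have "A p c * A t c < 0" using p(2) by (simp add: mult_pos_neg)
      then have "c = c1" by (rule opposite_signs_uniqueD[OF uniq p(1) t cols(1,2) _ c1t])
      with c1(1) show False by simp
    qed
  qed
  moreover have "c1 \<in> J" "c2 \<in> J" using c1(1) c2(1) by simp_all
  ultimately show ?thesis using that[OF rows p(2) q(2)] c1t c2t by blast
qed

lemma stuck_cyclic_triple:
  fixes A :: "nat \<Rightarrow> nat \<Rightarrow> real"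
  assumes uniq: "opposite_signs_unique 3 n A" and J: "stuck 3 A J" "J \<subseteq> {1..n}"
  obtains p q t \<alpha> \<beta> \<gamma> where "{1..3} = {p, q, t}" "{\<alpha>, \<beta>, \<gamma>} \<subseteq> {1..n}"
    and "A t \<alpha> = 0" "A p \<alpha> * A q \<alpha> < 0"
    and "A p \<beta> = 0" "A q \<beta> * A t \<beta> < 0"
    and "A q \<gamma> = 0" "A p \<gamma> * A t \<gamma> < 0"
proof -
  obtain c where c: "c \<in> J" using J(1) by (auto simp: stuck_def)
  obtain p q t c1 c2 where rows: "{1..3} = {p, q, t}" and pqt: "A p c > 0" "A q c < 0" "A t c = 0"
    and c1: "c1 \<in> J" "A p c1 * A t c1 < 0" and c2: "c2 \<in> J" "A q c2 * A t c2 < 0"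
    by (rule stuck_column_structure[OF uniq J c])
  have zero_row: "\<exists>z\<in>{p, q, t}. A z c' = 0" if c': "c' \<in> J" for c'
  proof -
    obtain p' q' t' c1' c2' where rows': "{1..3} = {p', q', t'}" and "A p' c' > 0" "A q' c' < 0"
      and zero: "A t' c' = 0" and "c1' \<in> J" "A p' c1' * A t' c1' < 0" "c2' \<in> J" "A q' c2' * A t' c2' < 0"
      by (rule stuck_column_structure[OF uniq J c'])
    have "t' \<in> {1..3}" by (simp only: rows' insertI1 insertI2)
    then have "t' \<in> {p, q, t}" by (simp only: rows)
    with zero show ?thesis by blast
  qed
  have "A q c1 = 0" using zero_row[OF c1(1)] c1(2) by auto
  moreover have "A p c2 = 0" using zero_row[OF c2(1)] c2(2) by auto
  moreover have "{c, c2, c1} \<subseteq> {1..n}" using c c1 c2 J(2) by auto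
  moreover have "A p c * A q c < 0" using pqt by (simp add: mult_pos_neg)
  ultimately show ?thesis using that[OF rows] pqt(3) c1(2) c2(2) by blast
qed

lemma sign_uniform_outside_opposite_columns:
  fixes A :: "nat \<Rightarrow> nat \<Rightarrow> real"
  assumes uniq: "opposite_signs_unique 3 n A" and rows: "{1..3} = {p, q, t}"
    and cols: "{\<alpha>, \<beta>, \<gamma>} \<subseteq> {1..n}"
    and \<alpha>: "A p \<alpha> * A q \<alpha> < 0" and \<beta>: "A q \<beta> * A t \<beta> < 0" and \<gamma>: "A p \<gamma> * A t \<gamma> < 0"
    and l: "l \<in> {1..n} - {\<alpha>, \<beta>, \<gamma>}"
  shows "(\<forall>i\<in>{p, q, t}. 0 \<le> A i l) \<or> (\<forall>i\<in>{p, q, t}. A i l \<le> 0)"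
proof (rule ccontr)
  assume "\<not> ?thesis"
  then obtain i i' where "i \<in> {p, q, t}" "A i l < 0" "i' \<in> {p, q, t}" "A i' l > 0"
    by (auto simp: not_le)
  then have "A p l * A q l < 0 \<or> A q l * A t l < 0 \<or> A p l * A t l < 0"
    by (auto simp: mult_less_0_iff)
  moreover have p: "p \<in> {1..3}" and q: "q \<in> {1..3}" and t: "t \<in> {1..3}"
    by (simp_all only: rows insertI1 insertI2)
  moreover have "l \<in> {1..n}" "\<alpha> \<in> {1..n}" "\<beta> \<in> {1..n}" "\<gamma> \<in> {1..n}" using l cols by auto
  ultimately have "l = \<alpha> \<or> l = \<beta> \<or> l = \<gamma>"
    using opposite_signs_uniqueD[OF uniq p q _ _ _ \<alpha>] opposite_signs_uniqueD[OF uniq q t _ _ _ \<beta>]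
      opposite_signs_uniqueD[OF uniq p t _ _ _ \<gamma>] by blast
  with l show False by blast
qed

theorem lemma7:
  fixes d n :: nat and A :: "nat \<Rightarrow> nat \<Rightarrow> real"
  assumes "d > 0"
    and "\<not> (\<exists>js. elim_ordering 3 n A js)"
  shows "\<exists>b :: nat \<Rightarrow> real. \<not> sol_graph_connected n (sol_set d 3 n A b)"
proof (cases "opposite_signs_unique 3 n A")
  case False
  then obtain r s j k where rs: "r \<in> {1..3}" "s \<in> {1..3}" and jk: "j \<in> {1..n}" "k \<in> {1..n}" "j \<noteq> k"
    and opp: "A r j * A s j < 0" "A r k * A s k < 0"
    unfolding opposite_signs_unique_def by blast
  show ?thesis
    using sol_graph_disconnected_of_two_opposite_columns[OF assms(1) rs jk opp]
      sol_graph_disconnected_of_two_opposite_columns[OF assms(1) rs jk(2,1) jk(3)[symmetric] opp(2,1)]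
    by (meson linorder_le_cases)
next
  case True
  obtain J where "J \<subseteq> {1..n}" "stuck 3 A J" using stuck_subset_if_no_elim_ordering[OF assms(2)] by blast
  then obtain p q t \<alpha> \<beta> \<gamma> where rows: "{1..3} = {p, q, t}" and cols: "{\<alpha>, \<beta>, \<gamma>} \<subseteq> {1..n}"
    and \<alpha>: "A t \<alpha> = 0" "A p \<alpha> * A q \<alpha> < 0" and \<beta>: "A p \<beta> = 0" "A q \<beta> * A t \<beta> < 0"
    and \<gamma>: "A q \<gamma> = 0" "A p \<gamma> * A t \<gamma> < 0"
    using stuck_cyclic_triple[OF True] by metis
  have "{p, q, t} \<subseteq> {1..3}" by (simp only: rows subset_refl)
  then show ?thesis
    using sol_graph_disconnected_of_cyclic_triple[OF assms(1) _ cols \<alpha> \<beta> \<gamma>]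
      sign_uniform_outside_opposite_columns[OF True rows cols \<alpha>(2) \<beta>(2) \<gamma>(2)] by blast
qed

end
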